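(* For integers $q\ge1$, $a$, $n$ define $S(q,a,n)=\sum_{x=1}^q e\big(\frac{ax^2+nx}{q}\big)$, and for integers $n_1,n_2,n_3,m$ define $$T(q;n_1,n_2,n_3,m)=\sum_{\substack{a=1\\ (a,q)=1}}^q S(q,a,n_1)S(q,a,n_2)S(q,a,n_3)\,e\Big(\frac{\overline{a}\,m}{q}\Big),$$ where $\overline{a}$ denotes the inverse of $a$ modulo $q$. If $q_1,q_2$ are positive integers with $(q_1,q_2)=1$, then for all integers $n_1,n_2,n_3,m$, $$T(q_1q_2;n_1,n_2,n_3,m)=T(q_1;n_1,n_2,n_3,m)\,T(q_2;n_1,n_2,n_3,m).$$
   Context: $e(z)=e^{2\pi i z}$. *)

theory Defs
  imports "HOL-Analysis.Analysis" "HOL-Number_Theory.Number_Theory"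
begin

definition e :: "real \<Rightarrow> complex" where
  "e z = exp (2 * of_real pi * \<i> * of_real z)"

definition S :: "int \<Rightarrow> int \<Rightarrow> int \<Rightarrow> complex" where
  "S q a n = (\<Sum>x\<in>{1..q}. e (of_int (a * x^2 + n * x) / of_int q))"

definition T :: "int \<Rightarrow> int \<Rightarrow> int \<Rightarrow> int \<Rightarrow> int \<Rightarrow> complex" where
  "T q n1 n2 n3 m = (\<Sum>a\<in>{a\<in>{1..q}. coprime a q}.
      S q a n1 * S q a n2 * S q a n3 * e (of_int (modular_inverse q a * m) / of_int q))"

end

theory Submission
  imports Defs
begin

(*
  By the Chinese remainder theorem x = q2 y1 + q1 y2 runs over the residues modulo q1 q2 as
  y1, y2 run over those modulo q1, q2, and a x^2 + n x is then congruent to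
  q2 (a q2 y1^2 + n y1) + q1 (a q1 y2^2 + n y2) modulo q1 q2; hence
  S(q1 q2, a, n) = S(q1, a q2, n) S(q2, a q1, n).
  The inverse of a modulo q1 q2 splits likewise as q2 i1 + q1 i2, with i1, i2 the inverses of
  a q2 modulo q1 and of a q1 modulo q2. So, parametrising a = q2 y1 + q1 y2 too, the summand of
  T(q1 q2) is the summand of T(q1) at q2^2 y1 times that of T(q2) at q1^2 y2, and as multiplying
  by a unit permutes the residues, the double sum is T(q1) T(q2).
*)

lemma e_add: "e (x + y) = e x * e y"
  unfolding e_def by (simp add: distrib_left exp_add)

lemma e_of_int: "e (of_int k) = 1"
proof -
  have "e (of_int k) = exp ((2 * of_real (of_int k) * pi) * \<i>)"
    unfolding e_def by (simp add: ac_simps)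
  also have "\<dots> = 1"
    by (rule exp_integer_2pi) simp
  finally show ?thesis .
qed

lemma e_frac_cong:
  fixes q u v :: int
  assumes "q \<noteq> 0" "[u = v] (mod q)"
  shows "e (of_int u / of_int q) = e (of_int v / of_int q)"
proof -
  obtain k where "u = v + q * k"
    using assms(2) by (metis cong_iff_dvd_diff dvdE diff_add_cancel add.commute)
  then have "of_int u / of_int q = of_int v / of_int q + (of_int k :: real)"
    using assms(1) by (simp add: field_simps)
  then show ?thesis
    by (simp add: e_add e_of_int)
qed

lemma e_partial_fractions:
  fixes q1 q2 u1 u2 :: int
  assumes "q1 \<noteq> 0" "q2 \<noteq> 0"
  shows "e (of_int (q2 * u1 + q1 * u2) / of_int (q1 * q2)) =
         e (of_int u1 / of_int q1) * e (of_int u2 / of_int q2)"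
proof -
  have "of_int (q2 * u1 + q1 * u2) / of_int (q1 * q2) =
        of_int u1 / of_int q1 + (of_int u2 / of_int q2 :: real)"
    using assms by (simp add: field_simps)
  then show ?thesis
    by (simp add: e_add)
qed

lemma e_quadratic_cong:
  fixes q a b n x y :: int
  assumes "q \<noteq> 0" "[a = b] (mod q)" "[x = y] (mod q)"
  shows "e (of_int (a * x^2 + n * x) / of_int q) = e (of_int (b * y^2 + n * y) / of_int q)"
  using assms by (intro e_frac_cong cong_add cong_mult cong_pow cong_refl) auto

lemma sum_periodic_shift:
  fixes f :: "int \<Rightarrow> 'a::comm_monoid_add"
  assumes "q \<ge> 1" and periodic: "\<And>x y. [x = y] (mod q) \<Longrightarrow> f x = f y"
  shows "sum f {1..q} = sum f {0..<q}"
proof -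
  have "{1..q} = insert q {1..<q}" "{0..<q} = insert 0 {1..<q}"
    using assms(1) by auto
  moreover have "f q = f 0"
    by (rule periodic) (simp add: cong_def)
  ultimately show ?thesis
    by simp
qed

lemma sum_periodic_mult_coprime:
  fixes f :: "int \<Rightarrow> 'a::comm_monoid_add"
  assumes "coprime c q" and periodic: "\<And>x y. [x = y] (mod q) \<Longrightarrow> f x = f y"
  shows "(\<Sum>x\<in>{0..<q}. f (c * x)) = sum f {0..<q}"
proof (cases "q \<ge> 1")
  case True
  have "(\<Sum>x\<in>{1..<q}. f (c * x)) = (\<Sum>x\<in>{1..<q}. f (c * x mod q))"
    by (intro sum.cong refl periodic) (simp add: cong_def)
  also have "\<dots> = sum f {1..<q}"
    using bij_betw_int_remainders_mult[OF assms(1)] by (rule sum.reindex_bij_betw)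
  finally have "(\<Sum>x\<in>{1..<q}. f (c * x)) = sum f {1..<q}" .
  moreover have "{0..<q} = insert 0 {1..<q}"
    using True by auto
  ultimately show ?thesis
    by simp
qed simp

lemma bij_betw_crt_combination:
  fixes q1 q2 :: int
  assumes "q1 \<ge> 1" "q2 \<ge> 1" "coprime q1 q2"
  shows "bij_betw (\<lambda>(y1, y2). (q2 * y1 + q1 * y2) mod (q1 * q2))
           ({0..<q1} \<times> {0..<q2}) {0..<q1 * q2}"
proof -
  let ?h = "\<lambda>(y1, y2). (q2 * y1 + q1 * y2) mod (q1 * q2)"
  have cancel: "[y1 = z1] (mod p1)"
    if "[p2 * y1 + p1 * y2 = p2 * z1 + p1 * z2] (mod p1)" "coprime p1 p2"
    for p1 p2 y1 y2 z1 z2 :: int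
  proof -
    have "p1 dvd p2 * (y1 - z1) + p1 * (y2 - z2)"
      using that(1) by (simp add: cong_iff_dvd_diff algebra_simps)
    then have "p1 dvd p2 * (y1 - z1)"
      by (simp add: dvd_add_left_iff)
    then show ?thesis
      using that(2) by (simp add: cong_iff_dvd_diff coprime_dvd_mult_right_iff)
  qed
  have "inj_on ?h ({0..<q1} \<times> {0..<q2})"
  proof (rule inj_onI, clarify)
    fix y1 y2 z1 z2
    assume ranges: "y1 \<in> {0..<q1}" "y2 \<in> {0..<q2}" "z1 \<in> {0..<q1}" "z2 \<in> {0..<q2}"
      and "(q2 * y1 + q1 * y2) mod (q1 * q2) = (q2 * z1 + q1 * z2) mod (q1 * q2)"
    then have eq: "[q2 * y1 + q1 * y2 = q2 * z1 + q1 * z2] (mod q1 * q2)"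
      by (simp add: cong_def)
    have "[y1 = z1] (mod q1)"
      using cancel[OF cong_modulus_mult[OF eq] assms(3)] .
    moreover have "[y2 = z2] (mod q2)"
    proof -
      have "[q1 * y2 + q2 * y1 = q1 * z2 + q2 * z1] (mod q2 * q1)"
        using eq by (simp add: ac_simps)
      then show ?thesis
        using assms(3) by (meson cancel cong_modulus_mult coprime_commute)
    qed
    ultimately show "y1 = z1 \<and> y2 = z2"
      using ranges by (auto intro: cong_less_imp_eq_int)
  qed
  moreover have "?h ` ({0..<q1} \<times> {0..<q2}) \<subseteq> {0..<q1 * q2}"
    using assms by auto
  moreover have "card ({0..<q1} \<times> {0..<q2}) = card {0..<q1 * q2}"
    using assms by (simp add: card_cartesian_product nat_mult_distrib)
  ultimately show ?thesis
    unfolding bij_betw_def by (metis card_image card_subset_eq finite_atLeastLessThan_int)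
qed

lemma sum_periodic_crt:
  fixes f :: "int \<Rightarrow> 'a::comm_monoid_add" and q1 q2 :: int
  assumes "q1 \<ge> 1" "q2 \<ge> 1" "coprime q1 q2"
    and periodic: "\<And>x y. [x = y] (mod q1 * q2) \<Longrightarrow> f x = f y"
  shows "sum f {0..<q1 * q2} = (\<Sum>y1\<in>{0..<q1}. \<Sum>y2\<in>{0..<q2}. f (q2 * y1 + q1 * y2))"
proof -
  have "sum f {0..<q1 * q2} =
        (\<Sum>(y1, y2)\<in>{0..<q1} \<times> {0..<q2}. f ((q2 * y1 + q1 * y2) mod (q1 * q2)))"
    using sum.reindex_bij_betw[OF bij_betw_crt_combination[OF assms(1-3)], of f]
    by (simp add: case_prod_beta')
  also have "\<dots> = (\<Sum>(y1, y2)\<in>{0..<q1} \<times> {0..<q2}. f (q2 * y1 + q1 * y2))"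
    by (intro sum.cong refl) (auto intro: periodic simp: cong_def)
  finally show ?thesis
    by (simp add: sum.cartesian_product)
qed

lemma S_cong:
  fixes q a b n :: int
  assumes "[a = b] (mod q)"
  shows "S q a n = S q b n"
  unfolding S_def using assms by (intro sum.cong refl e_quadratic_cong) auto

lemma S_eq_sum_residues:
  fixes q a n :: int
  assumes "q \<ge> 1"
  shows "S q a n = (\<Sum>x\<in>{0..<q}. e (of_int (a * x^2 + n * x) / of_int q))"
  unfolding S_def using assms by (intro sum_periodic_shift e_quadratic_cong) auto

lemma S_mult_coprime:
  fixes q1 q2 a n :: int
  assumes "q1 \<ge> 1" "q2 \<ge> 1" "coprime q1 q2"
  shows "S (q1 * q2) a n = S q1 (a * q2) n * S q2 (a * q1) n"
proof -
  let ?f = "\<lambda>x. e (of_int (a * x^2 + n * x) / of_int (q1 * q2))"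
  let ?f1 = "\<lambda>y1. e (of_int (a * q2 * y1^2 + n * y1) / of_int q1)"
  let ?f2 = "\<lambda>y2. e (of_int (a * q1 * y2^2 + n * y2) / of_int q2)"
  have q: "q1 * q2 \<ge> 1"
    using assms mult_mono[of 1 q1 1 q2] by simp
  have factor: "?f (q2 * y1 + q1 * y2) = ?f1 y1 * ?f2 y2" for y1 y2
  proof -
    let ?x = "q2 * y1 + q1 * y2"
    let ?u1 = "a * q2 * y1^2 + n * y1" and ?u2 = "a * q1 * y2^2 + n * y2"
    have "a * ?x^2 + n * ?x = q2 * ?u1 + q1 * ?u2 + q1 * q2 * (2 * a * y1 * y2)"
      by (simp add: power2_eq_square algebra_simps)
    then have "[a * ?x^2 + n * ?x = q2 * ?u1 + q1 * ?u2] (mod q1 * q2)"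
      by (simp add: cong_iff_dvd_diff)
    then have "?f ?x = e (of_int (q2 * ?u1 + q1 * ?u2) / of_int (q1 * q2))"
      using q by (intro e_frac_cong) auto
    also have "\<dots> = ?f1 y1 * ?f2 y2"
      using assms by (intro e_partial_fractions) auto
    finally show ?thesis .
  qed
  have "S (q1 * q2) a n = sum ?f {0..<q1 * q2}"
    by (rule S_eq_sum_residues[OF q])
  also have "\<dots> = (\<Sum>y1\<in>{0..<q1}. \<Sum>y2\<in>{0..<q2}. ?f (q2 * y1 + q1 * y2))"
    using assms q by (intro sum_periodic_crt e_quadratic_cong) auto
  also have "\<dots> = sum ?f1 {0..<q1} * sum ?f2 {0..<q2}"
    by (simp only: factor sum_product)
  also have "\<dots> = S q1 (a * q2) n * S q2 (a * q1) n"
    using assms by (simp add: S_eq_sum_residues)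
  finally show ?thesis .
qed

lemma modular_inverse_cong:
  fixes q a b :: int
  assumes "q > 0" "[a = b] (mod q)"
  shows "modular_inverse q a = modular_inverse q b"
proof (cases "coprime a q")
  case True
  then have "coprime b q"
    using assms(2) by (rule cong_imp_coprime[rotated])
  have "[a * modular_inverse q b = b * modular_inverse q b] (mod q)"
    using assms(2) by (rule cong_scalar_right)
  also have "[b * modular_inverse q b = 1] (mod q)"
    using \<open>coprime b q\<close> by (rule cong_modular_inverse1)
  finally show ?thesis
    using assms(1)
    by (intro modular_inverse_int_eqI) (auto simp: modular_inverse_int_nonneg modular_inverse_int_less)
next
  case False
  then have "\<not> coprime b q"
    using assms(2) cong_imp_coprime cong_sym by blast
  with False show ?thesis
    by simp
qed

lemma modular_inverse_mult_coprime_cong: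
  fixes q1 q2 a :: int
  assumes "coprime a (q1 * q2)" "coprime q1 q2"
  shows "[modular_inverse (q1 * q2) a =
          q2 * modular_inverse q1 (a * q2) + q1 * modular_inverse q2 (a * q1)] (mod q1 * q2)"
proof -
  have half: "[a * (p2 * modular_inverse p1 (a * p2) + p1 * y) = 1] (mod p1)"
    if "coprime a p1" "coprime p2 p1" for p1 p2 y :: int
  proof -
    have "[a * (p2 * modular_inverse p1 (a * p2) + p1 * y) =
           a * p2 * modular_inverse p1 (a * p2)] (mod p1)"
      by (simp add: cong_iff_dvd_diff algebra_simps)
    also have "[a * p2 * modular_inverse p1 (a * p2) = 1] (mod p1)"
      using that by (intro cong_modular_inverse1) simp
    finally show ?thesis .
  qed
  let ?i = "q2 * modular_inverse q1 (a * q2) + q1 * modular_inverse q2 (a * q1)"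
  have "[a * ?i = 1] (mod q1)"
    using assms by (intro half) (auto simp: coprime_commute)
  moreover have "[a * ?i = 1] (mod q2)"
    using half[of q2 q1 "modular_inverse q1 (a * q2)"] assms
    by (simp add: add.commute coprime_commute)
  ultimately have "[a * ?i = 1] (mod q1 * q2)"
    using assms(2) by (rule coprime_cong_mult)
  moreover have "[a * modular_inverse (q1 * q2) a = 1] (mod q1 * q2)"
    using assms(1) by (rule cong_modular_inverse1)
  ultimately have "[a * modular_inverse (q1 * q2) a = a * ?i] (mod q1 * q2)"
    by (meson cong_sym cong_trans)
  then show ?thesis
    using assms(1) by (simp add: cong_mult_lcancel coprime_commute)
qed

(* Extended by zero to a not coprime to q, so that T becomes a sum over a full residue system. *)
definition T_summand :: "int \<Rightarrow> int \<Rightarrow> int \<Rightarrow> int \<Rightarrow> int \<Rightarrow> int \<Rightarrow> complex" where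
  "T_summand q n1 n2 n3 m a =
     (if coprime a q
      then S q a n1 * S q a n2 * S q a n3 * e (of_int (modular_inverse q a * m) / of_int q)
      else 0)"

lemma T_summand_cong:
  fixes q a b :: int
  assumes "q \<ge> 1" "[a = b] (mod q)"
  shows "T_summand q n1 n2 n3 m a = T_summand q n1 n2 n3 m b"
proof -
  have "coprime a q \<longleftrightarrow> coprime b q"
    using assms(2) cong_imp_coprime cong_sym by blast
  moreover have "S q a n = S q b n" for n
    using assms(2) by (rule S_cong)
  moreover have "modular_inverse q a = modular_inverse q b"
    using assms by (intro modular_inverse_cong) auto
  ultimately show ?thesis
    unfolding T_summand_def by simp
qed

lemma T_eq_sum_T_summand:
  fixes q :: int
  assumes "q \<ge> 1"
  shows "T q n1 n2 n3 m = (\<Sum>a\<in>{0..<q}. T_summand q n1 n2 n3 m a)"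
proof -
  have "T q n1 n2 n3 m = (\<Sum>a\<in>{1..q}. T_summand q n1 n2 n3 m a)"
    unfolding T_def T_summand_def by (rule sum.inter_filter) simp
  also have "\<dots> = (\<Sum>a\<in>{0..<q}. T_summand q n1 n2 n3 m a)"
    using assms by (intro sum_periodic_shift T_summand_cong)
  finally show ?thesis .
qed

lemma T_summand_mult_coprime:
  fixes q1 q2 a :: int
  assumes "q1 \<ge> 1" "q2 \<ge> 1" "coprime q1 q2"
  shows "T_summand (q1 * q2) n1 n2 n3 m a =
         T_summand q1 n1 n2 n3 m (a * q2) * T_summand q2 n1 n2 n3 m (a * q1)"
proof (cases "coprime a (q1 * q2)")
  case False
  then have "\<not> coprime (a * q2) q1 \<or> \<not> coprime (a * q1) q2"
    using assms(3) by (auto simp: coprime_commute)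
  with False show ?thesis
    unfolding T_summand_def by auto
next
  case True
  let ?i = "modular_inverse (q1 * q2) a"
  let ?i1 = "modular_inverse q1 (a * q2)" and ?i2 = "modular_inverse q2 (a * q1)"
  have "[?i * m = q2 * (?i1 * m) + q1 * (?i2 * m)] (mod q1 * q2)"
    using cong_scalar_right[OF modular_inverse_mult_coprime_cong[OF True assms(3)], of m]
    by (simp add: algebra_simps)
  then have "e (of_int (?i * m) / of_int (q1 * q2)) =
             e (of_int (q2 * (?i1 * m) + q1 * (?i2 * m)) / of_int (q1 * q2))"
    using assms by (intro e_frac_cong) auto
  also have "\<dots> = e (of_int (?i1 * m) / of_int q1) * e (of_int (?i2 * m) / of_int q2)"
    using assms by (intro e_partial_fractions) auto
  finally have "e (of_int (?i * m) / of_int (q1 * q2)) =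
                e (of_int (?i1 * m) / of_int q1) * e (of_int (?i2 * m) / of_int q2)" .
  moreover have "coprime (a * q2) q1" "coprime (a * q1) q2"
    using True assms(3) by (auto simp: coprime_commute)
  ultimately show ?thesis
    using True assms by (simp add: T_summand_def S_mult_coprime ac_simps)
qed

theorem lemma3p5:
  fixes q1 q2 n1 n2 n3 m :: int
  assumes "q1 \<ge> 1" and "q2 \<ge> 1" and "coprime q1 q2"
  shows "T (q1 * q2) n1 n2 n3 m = T q1 n1 n2 n3 m * T q2 n1 n2 n3 m"
proof -
  let ?t = "T_summand (q1 * q2) n1 n2 n3 m"
  let ?t1 = "T_summand q1 n1 n2 n3 m" and ?t2 = "T_summand q2 n1 n2 n3 m"
  have q: "q1 * q2 \<ge> 1"
    using assms mult_mono[of 1 q1 1 q2] by simp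
  have split: "?t (q2 * y1 + q1 * y2) = ?t1 (q2^2 * y1) * ?t2 (q1^2 * y2)" for y1 y2
  proof -
    have "[(q2 * y1 + q1 * y2) * q2 = q2^2 * y1] (mod q1)"
      by (simp add: cong_iff_dvd_diff power2_eq_square algebra_simps)
    moreover have "[(q2 * y1 + q1 * y2) * q1 = q1^2 * y2] (mod q2)"
      by (simp add: cong_iff_dvd_diff power2_eq_square algebra_simps)
    ultimately show ?thesis
      using assms by (simp add: T_summand_mult_coprime T_summand_cong)
  qed
  have "T (q1 * q2) n1 n2 n3 m = sum ?t {0..<q1 * q2}"
    by (rule T_eq_sum_T_summand[OF q])
  also have "\<dots> = (\<Sum>y1\<in>{0..<q1}. \<Sum>y2\<in>{0..<q2}. ?t (q2 * y1 + q1 * y2))"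
    using assms q by (intro sum_periodic_crt T_summand_cong)
  also have "\<dots> = (\<Sum>y1\<in>{0..<q1}. ?t1 (q2^2 * y1)) *
                   (\<Sum>y2\<in>{0..<q2}. ?t2 (q1^2 * y2))"
    by (simp add: split sum_product)
  also have "\<dots> = T q1 n1 n2 n3 m * T q2 n1 n2 n3 m"
    using assms
    by (simp add: sum_periodic_mult_coprime T_summand_cong T_eq_sum_T_summand coprime_commute)
  finally show ?thesis .
qed

end
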